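(* Let $G$ be a connected weighted multigraph on the vertex set $V$, $|V|\ge 2$, with positive edge weights and weighted adjacency matrix $A$. Let $i,j\in V$ be distinct. Then for every $t\in\bigl(0,(\rho(A_{jj}))^{-1}\bigr)$, the total weight $r_{ij(1)}(t)$ of all $i\to j$ hitting walks in $G(t)$ is finite and $$r_{ij(1)}(t)=\bigl(t^{-1}I-A_{jj}\bigr)^{-1}_i\,a_{\setminus j\,j}.$$
   Context: $G$ may have loops and multiple edges; $A=(a_{ij})$ has $a_{ij}$ equal to the sum of weights of the edges joining $i$ and $j$; $\rho(\cdot)$ denotes spectral radius. $G(t)$ is $G$ with all edge weights multiplied by $t$. A $v_0\to v_m$ walk is an alternating sequence of vertices and edges $v_0,e_1,v_1,\dots,e_m,v_m$ with $e_k$ joining $v_{k-1},v_k$; its weight is the product of its edge weights; a hitting $v_0\to v_m$ walk is one containing only one occurrence of $v_m$. Matrices are indexed by vertices; $A_{jj}$ is $A$ with row and column $j$ deleted (indexed by $V\setminus\{j\}$); $N^{-1}_i$ is the row of $N^{-1}$ indexed by $i$; $a_{\setminus j\,j}$ is column $j$ of $A$ with $a_{jj}$ removed. *)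

theory Defs
  imports "HOL-Analysis.Analysis" "Jordan_Normal_Form.Spectral_Radius" "Jordan_Normal_Form.Determinant"
begin

(* A weighted multigraph on the vertex set {0..<n}: a finite edge set E of some type 'e,
   each edge e has a set of end vertices  ends e  (a singleton for a loop, a 2-set otherwise),
   and a weight  w e. *)
definition multigraph :: "nat \<Rightarrow> 'e set \<Rightarrow> ('e \<Rightarrow> nat set) \<Rightarrow> bool" where
  "multigraph n E ends \<longleftrightarrow> finite E \<and>
     (\<forall>e\<in>E. ends e \<subseteq> {0..<n} \<and> 1 \<le> card (ends e) \<and> card (ends e) \<le> 2)"

definition adj_mat :: "nat \<Rightarrow> 'e set \<Rightarrow> ('e \<Rightarrow> nat set) \<Rightarrow> ('e \<Rightarrow> real) \<Rightarrow> real mat" where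
  "adj_mat n E ends w = mat n n (\<lambda>(i,j). \<Sum>e\<in>{e\<in>E. ends e = {i,j}}. w e)"

(* A walk v0,e1,v1,...,em,vm is represented as (v0, [(e1,v1),...,(em,vm)]). *)
type_synonym 'e walk = "nat \<times> ('e \<times> nat) list"

definition walk_verts :: "'e walk \<Rightarrow> nat list" where
  "walk_verts p = fst p # map snd (snd p)"

definition is_walk :: "nat \<Rightarrow> 'e set \<Rightarrow> ('e \<Rightarrow> nat set) \<Rightarrow> 'e walk \<Rightarrow> bool" where
  "is_walk n E ends p \<longleftrightarrow> fst p < n \<and>
     (\<forall>k < length (snd p). fst (snd p ! k) \<in> E \<and>
        ends (fst (snd p ! k)) = {walk_verts p ! k, walk_verts p ! Suc k})"

definition walk_weight :: "('e \<Rightarrow> real) \<Rightarrow> 'e walk \<Rightarrow> real" where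
  "walk_weight w p = prod_list (map (\<lambda>x. w (fst x)) (snd p))"

definition connected_mg :: "nat \<Rightarrow> 'e set \<Rightarrow> ('e \<Rightarrow> nat set) \<Rightarrow> bool" where
  "connected_mg n E ends \<longleftrightarrow> (\<forall>u<n. \<forall>v<n. \<exists>p. is_walk n E ends p \<and> fst p = u \<and> last (walk_verts p) = v)"

definition hitting_walks :: "nat \<Rightarrow> 'e set \<Rightarrow> ('e \<Rightarrow> nat set) \<Rightarrow> nat \<Rightarrow> nat \<Rightarrow> 'e walk set" where
  "hitting_walks n E ends i j = {p. is_walk n E ends p \<and> fst p = i \<and> last (walk_verts p) = j \<and>
      length (filter (\<lambda>v. v = j) (walk_verts p)) = 1}"

(* index of vertex k (k \<noteq> j) in the matrices indexed by V - {j} = {0..<n} - {j} *)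
definition del_pos :: "nat \<Rightarrow> nat \<Rightarrow> nat" where
  "del_pos j k = (if k < j then k else k - 1)"

definition del_vert :: "nat \<Rightarrow> nat \<Rightarrow> nat" where
  "del_vert j k = (if k < j then k else k + 1)"

definition col_del :: "real mat \<Rightarrow> nat \<Rightarrow> real vec" where
  "col_del A j = vec (dim_row A - 1) (\<lambda>k. A $$ (del_vert j k, j))"

end

theory Submission
  imports Defs
begin

text \<open>A hitting walk from \<open>u \<noteq> j\<close> to \<open>j\<close> is either a single edge into \<open>j\<close>, or an edge to some
  \<open>v \<noteq> j\<close> followed by a hitting walk from \<open>v\<close>. Grouping hitting walks by length, the total weight
  of those of length \<open>k + 1\<close> is therefore the entry at \<open>i\<close> of \<open>A\<^sub>j\<^sub>j\<^sup>k a\<^sub>\<setminus>\<^sub>j\<^sub>j\<close>. For the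
  weights \<open>t w\<close> these are the terms of the Neumann series of \<open>t A\<^sub>j\<^sub>j\<close> applied to \<open>t a\<^sub>\<setminus>\<^sub>j\<^sub>j\<close>,
  which converges to \<open>(t\<^sup>-\<^sup>1 I - A\<^sub>j\<^sub>j)\<^sup>-\<^sup>1 a\<^sub>\<setminus>\<^sub>j\<^sub>j\<close> because \<open>t A\<^sub>j\<^sub>j\<close> has spectral radius below 1;
  as all weights are nonnegative, the series also gives the unordered sum over all hitting walks.\<close>

lemma walk_verts_Cons: "walk_verts (u, (e,v) # xs) = u # walk_verts (v, xs)"
  by (simp add: walk_verts_def)

lemma last_walk_verts_Cons: "last (walk_verts (u, (e,v) # xs)) = last (walk_verts (v, xs))"
  by (simp add: walk_verts_def)

lemma walk_weight_Cons: "walk_weight w (u, (e,v) # xs) = w e * walk_weight w (v, xs)"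
  by (simp add: walk_weight_def)

lemma multigraph_ends_less:
  assumes "multigraph n E ends" "e \<in> E" "ends e = {u,v}"
  shows "u < n" "v < n"
  using assms unfolding multigraph_def by auto

lemma is_walk_Cons:
  assumes "multigraph n E ends"
  shows "is_walk n E ends (u, (e,v) # xs) \<longleftrightarrow>
           u < n \<and> e \<in> E \<and> ends e = {u,v} \<and> is_walk n E ends (v, xs)"
proof -
  have "(\<forall>k<Suc m. P k) \<longleftrightarrow> P 0 \<and> (\<forall>k<m. P (Suc k))" for m and P :: "nat \<Rightarrow> bool"
    using less_Suc_eq_0_disj by auto
  then show ?thesis
    using multigraph_ends_less[OF assms]
    unfolding is_walk_def walk_verts_Cons by (auto simp: walk_verts_def)
qed

lemma is_walk_edges_subset:
  assumes "multigraph n E ends" "is_walk n E ends p"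
  shows "set (snd p) \<subseteq> E \<times> {0..<n}"
proof
  fix x assume "x \<in> set (snd p)"
  then obtain k where k: "k < length (snd p)" "snd p ! k = x"
    by (auto simp: in_set_conv_nth)
  with assms(2) have "fst x \<in> E" "ends (fst x) = {walk_verts p ! k, snd x}"
    unfolding is_walk_def by (auto simp: walk_verts_def)
  with multigraph_ends_less[OF assms(1)] show "x \<in> E \<times> {0..<n}"
    by (cases x) auto
qed

lemma walk_weight_nonneg:
  assumes "is_walk n E ends p" "\<forall>e\<in>E. 0 \<le> w e"
  shows "0 \<le> walk_weight w p"
  unfolding walk_weight_def
proof (rule prod_list_nonneg)
  fix x assume "x \<in> set (map (\<lambda>x. w (fst x)) (snd p))"
  then obtain k where "k < length (snd p)" "x = w (fst (snd p ! k))"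
    by (auto simp: in_set_conv_nth)
  with assms show "0 \<le> x"
    by (auto simp: is_walk_def)
qed

lemma hitting_walks_Cons:
  assumes mg: "multigraph n E ends" and "u \<noteq> j"
  shows "(u', (e,v) # xs) \<in> hitting_walks n E ends u j \<longleftrightarrow>
           u' = u \<and> u < n \<and> e \<in> E \<and> ends e = {u,v} \<and>
           (v = j \<and> xs = [] \<and> j < n \<or> v \<noteq> j \<and> (v, xs) \<in> hitting_walks n E ends v j)"
proof -
  define vs where "vs = walk_verts (v, xs)"
  define ws where "ws = map snd xs"
  have vs: "vs = v # ws"
    by (simp add: vs_def ws_def walk_verts_def)
  have unfold: "(u', (e,v) # xs) \<in> hitting_walks n E ends u j \<longleftrightarrow>
      u' = u \<and> u < n \<and> e \<in> E \<and> ends e = {u,v} \<and> is_walk n E ends (v, xs) \<and>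
      last vs = j \<and> length (filter (\<lambda>x. x = j) vs) = 1"
    using \<open>u \<noteq> j\<close> unfolding hitting_walks_def
    by (auto simp: is_walk_Cons[OF mg] last_walk_verts_Cons walk_verts_Cons vs_def)
  show ?thesis
  proof (cases "v = j \<and> xs \<noteq> []")
    case True
    then have "last vs \<in> set ws"
      using last_in_set[of ws] by (simp add: vs ws_def)
    then have "last vs = j \<Longrightarrow> filter (\<lambda>x. x = j) ws \<noteq> []"
      by (metis (mono_tags) filter_empty_conv)
    with True have "last vs = j \<Longrightarrow> length (filter (\<lambda>x. x = j) vs) \<noteq> 1"
      by (simp add: vs)
    with True unfold show ?thesis
      by auto
  next
    case False
    have "(v, xs) \<in> hitting_walks n E ends v j \<longleftrightarrow>
        is_walk n E ends (v, xs) \<and> last vs = j \<and> length (filter (\<lambda>x. x = j) vs) = 1"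
      by (simp add: hitting_walks_def vs_def)
    moreover have "is_walk n E ends (v, []) \<longleftrightarrow> v < n"
      by (simp add: is_walk_def)
    ultimately show ?thesis
      using False unfold by (auto simp: vs ws_def)
  qed
qed

section \<open>Hitting walks grouped by length\<close>

definition hitting_walks_len :: "nat \<Rightarrow> 'e set \<Rightarrow> ('e \<Rightarrow> nat set) \<Rightarrow> nat \<Rightarrow> nat \<Rightarrow> nat \<Rightarrow> 'e walk set" where
  "hitting_walks_len n E ends u j m = {p \<in> hitting_walks n E ends u j. length (snd p) = m}"

lemma hitting_walks_eq_UN_len: "hitting_walks n E ends u j = (\<Union>m. hitting_walks_len n E ends u j m)"
  by (auto simp: hitting_walks_len_def)

lemma disjoint_family_hitting_walks_len: "disjoint_family (hitting_walks_len n E ends u j)"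
  by (auto simp: disjoint_family_on_def hitting_walks_len_def)

lemma finite_hitting_walks_len:
  assumes "multigraph n E ends"
  shows "finite (hitting_walks_len n E ends u j m)"
proof -
  have "finite (E \<times> {0..<n})"
    using assms unfolding multigraph_def by auto
  then have "finite ({u} \<times> {xs. set xs \<subseteq> E \<times> {0..<n} \<and> length xs = m})"
    using finite_lists_length_eq by blast
  moreover have "hitting_walks_len n E ends u j m \<subseteq> {u} \<times> {xs. set xs \<subseteq> E \<times> {0..<n} \<and> length xs = m}"
    unfolding hitting_walks_len_def hitting_walks_def
    by (fastforce dest: is_walk_edges_subset[OF assms])
  ultimately show ?thesis
    by (rule finite_subset[rotated])
qed

lemma hitting_walks_len_0:
  assumes "u \<noteq> j"
  shows "hitting_walks_len n E ends u j 0 = {}"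
  using assms unfolding hitting_walks_len_def hitting_walks_def by (auto simp: walk_verts_def)

lemma hitting_walks_len_1:
  assumes mg: "multigraph n E ends" and "u \<noteq> j" "j < n"
  shows "hitting_walks_len n E ends u j 1 = (\<lambda>e. (u, [(e,j)])) ` {e \<in> E. ends e = {u,j}}"
proof (rule Set.set_eqI)
  fix p :: "'a walk"
  obtain u' xs where p: "p = (u', xs)"
    by (cases p)
  have "(v, []) \<in> hitting_walks n E ends v j \<Longrightarrow> v = j" for v
    by (simp add: hitting_walks_def walk_verts_def)
  then show "p \<in> hitting_walks_len n E ends u j 1 \<longleftrightarrow> p \<in> (\<lambda>e. (u, [(e,j)])) ` {e \<in> E. ends e = {u,j}}"
    using hitting_walks_Cons[OF mg \<open>u \<noteq> j\<close>] multigraph_ends_less[OF mg] \<open>j < n\<close>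
    by (cases xs) (auto simp: p hitting_walks_len_def length_Suc_conv)
qed

lemma hitting_walks_len_Suc_Suc:
  assumes mg: "multigraph n E ends" and "u \<noteq> j"
  shows "hitting_walks_len n E ends u j (Suc (Suc m)) =
           (\<lambda>(v, e, q). (u, (e,v) # snd q)) `
             (SIGMA v:{0..<n} - {j}. {e \<in> E. ends e = {u,v}} \<times> hitting_walks_len n E ends v j (Suc m))"
    (is "?L = ?h ` ?S")
proof (rule Set.set_eqI)
  fix p :: "'a walk"
  show "p \<in> ?L \<longleftrightarrow> p \<in> ?h ` ?S"
  proof
    assume "p \<in> ?L"
    then obtain e v xs where p: "p = (u, (e,v) # xs)" and "length xs = Suc m"
      and "(fst p, (e,v) # xs) \<in> hitting_walks n E ends u j"
      unfolding hitting_walks_len_def hitting_walks_def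
      by (cases p; cases "snd p") (auto simp: length_Suc_conv)
    with hitting_walks_Cons[OF mg \<open>u \<noteq> j\<close>] multigraph_ends_less[OF mg]
    have "(v, e, (v, xs)) \<in> ?S"
      by (auto simp: hitting_walks_len_def)
    then show "p \<in> ?h ` ?S"
      by (rule rev_image_eqI) (simp add: p)
  next
    assume "p \<in> ?h ` ?S"
    then obtain x where x_mem: "x \<in> ?S" and p: "p = ?h x"
      by (rule imageE)
    obtain v e q where x: "x = (v, e, q)"
      by (cases x)
    have "fst q = v"
      using x_mem by (auto simp: x hitting_walks_len_def hitting_walks_def)
    with x_mem show "p \<in> ?L"
      using hitting_walks_Cons[OF mg \<open>u \<noteq> j\<close>] multigraph_ends_less[OF mg]
      by (cases q) (auto simp: hitting_walks_len_def x p)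
  qed
qed

lemma adj_mat_index:
  "a < n \<Longrightarrow> b < n \<Longrightarrow> adj_mat n E ends w $$ (a,b) = (\<Sum>e \<in> {e \<in> E. ends e = {a,b}}. w e)"
  by (simp add: adj_mat_def)

lemma sum_walk_weight_hitting_walks_len_1:
  assumes mg: "multigraph n E ends" and "u \<noteq> j" "u < n" "j < n"
  shows "(\<Sum>p \<in> hitting_walks_len n E ends u j 1. walk_weight w p) = adj_mat n E ends w $$ (u,j)"
proof -
  have "inj_on (\<lambda>e. (u, [(e,j)])) {e \<in> E. ends e = {u,j}}"
    by (auto simp: inj_on_def)
  then show ?thesis
    unfolding hitting_walks_len_1[OF mg \<open>u \<noteq> j\<close> \<open>j < n\<close>]
    using assms by (simp add: sum.reindex adj_mat_index walk_weight_def)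
qed

lemma sum_walk_weight_hitting_walks_len_Suc_Suc:
  assumes mg: "multigraph n E ends" and "u \<noteq> j" "u < n"
  shows "(\<Sum>p \<in> hitting_walks_len n E ends u j (Suc (Suc m)). walk_weight w p) =
           (\<Sum>v \<in> {0..<n} - {j}. adj_mat n E ends w $$ (u,v) *
              (\<Sum>p \<in> hitting_walks_len n E ends v j (Suc m). walk_weight w p))"
proof -
  let ?E = "\<lambda>v. {e \<in> E. ends e = {u,v}}"
  let ?H = "\<lambda>v. hitting_walks_len n E ends v j (Suc m)"
  let ?h = "\<lambda>(v, e, q). (u, (e,v) # snd q) :: 'a walk"
  have finE: "finite (?E v)" for v
    using mg unfolding multigraph_def by auto
  have "inj_on ?h (SIGMA v:{0..<n} - {j}. ?E v \<times> ?H v)"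
    by (auto simp: inj_on_def hitting_walks_len_def hitting_walks_def)
  then have "(\<Sum>p \<in> hitting_walks_len n E ends u j (Suc (Suc m)). walk_weight w p) =
      (\<Sum>(v, e, q) \<in> (SIGMA v:{0..<n} - {j}. ?E v \<times> ?H v). w e * walk_weight w q)"
    unfolding hitting_walks_len_Suc_Suc[OF mg \<open>u \<noteq> j\<close>]
    by (subst sum.reindex) (auto simp: hitting_walks_len_def hitting_walks_def walk_weight_Cons
        intro!: sum.cong)
  also have "\<dots> = (\<Sum>v \<in> {0..<n} - {j}. \<Sum>(e, q) \<in> ?E v \<times> ?H v. w e * walk_weight w q)"
    using finE finite_hitting_walks_len[OF mg] by (subst sum.Sigma) auto
  also have "\<dots> = (\<Sum>v \<in> {0..<n} - {j}. sum w (?E v) * sum (walk_weight w) (?H v))"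
    by (simp add: sum_product sum.cartesian_product)
  also have "\<dots> = (\<Sum>v \<in> {0..<n} - {j}. adj_mat n E ends w $$ (u,v) * sum (walk_weight w) (?H v))"
    using \<open>u < n\<close> by (intro sum.cong) (auto simp: adj_mat_index)
  finally show ?thesis .
qed

lemma del_vert_bij_betw:
  assumes "j < n"
  shows "bij_betw (del_vert j) {..<n - 1} ({0..<n} - {j})"
  by (rule bij_betw_byWitness[where f' = "del_pos j"]) (use assms in \<open>auto simp: del_vert_def del_pos_def\<close>)

lemma del_vert_del_pos: "i \<noteq> j \<Longrightarrow> del_vert j (del_pos j i) = i"
  by (auto simp: del_vert_def del_pos_def)

lemma mat_delete_index_del_vert:
  assumes "A \<in> carrier_mat n n" "r < n - 1" "l < n - 1"
  shows "mat_delete A j j $$ (r,l) = A $$ (del_vert j r, del_vert j l)"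
  using assms by (simp add: mat_delete_def del_vert_def)

lemma col_del_index:
  assumes "A \<in> carrier_mat n n" "r < n - 1"
  shows "col_del A j $ r = A $$ (del_vert j r, j)"
  using assms by (simp add: col_del_def)

lemma pow_mat_Suc_left:
  fixes A :: "'a::semiring_1 mat"
  assumes "A \<in> carrier_mat n n"
  shows "A ^\<^sub>m Suc k = A * A ^\<^sub>m k"
proof (induction k)
  case (Suc k)
  then show ?case
    using assms by (simp add: assoc_mult_mat[of _ n n _ n _ n])
qed (use assms in simp)

lemma index_mult_mat_vec_sum:
  assumes "A \<in> carrier_mat n n" "v \<in> carrier_vec n" "r < n"
  shows "(A *\<^sub>v v) $ r = (\<Sum>l<n. A $$ (r,l) * v $ l)"
  using assms by (auto simp: scalar_prod_def lessThan_atLeast0 intro!: sum.cong)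

lemma sum_walk_weight_hitting_walks_len_eq_pow_mat:
  assumes mg: "multigraph n E ends" and "j < n" "r < n - 1"
  shows "(\<Sum>p \<in> hitting_walks_len n E ends (del_vert j r) j (Suc k). walk_weight w p) =
           (mat_delete (adj_mat n E ends w) j j ^\<^sub>m k *\<^sub>v col_del (adj_mat n E ends w) j) $ r"
proof -
  let ?A = "adj_mat n E ends w"
  let ?B = "mat_delete ?A j j"
  let ?b = "col_del ?A j"
  let ?G = "\<lambda>v k. \<Sum>p \<in> hitting_walks_len n E ends v j (Suc k). walk_weight w p"
  have A: "?A \<in> carrier_mat n n" and B: "?B \<in> carrier_mat (n - 1) (n - 1)"
    and b: "?b \<in> carrier_vec (n - 1)"
    by (auto simp: adj_mat_def mat_delete_def col_del_def)
  have del_vert: "del_vert j r < n" "del_vert j r \<noteq> j" if "r < n - 1" for r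
    using that \<open>j < n\<close> by (auto simp: del_vert_def)
  show ?thesis
    using \<open>r < n - 1\<close>
  proof (induction k arbitrary: r)
    case 0
    then show ?case
      using sum_walk_weight_hitting_walks_len_1[OF mg del_vert(2,1) \<open>j < n\<close>] A b
      by (simp add: col_del_index[OF A])
  next
    case (Suc k)
    have "?G (del_vert j r) (Suc k) = (\<Sum>v \<in> {0..<n} - {j}. ?A $$ (del_vert j r, v) * ?G v k)"
      by (rule sum_walk_weight_hitting_walks_len_Suc_Suc[OF mg del_vert(2,1)[OF Suc.prems]])
    also have "\<dots> = (\<Sum>l < n - 1. ?A $$ (del_vert j r, del_vert j l) * ?G (del_vert j l) k)"
      by (rule sum.reindex_bij_betw[OF del_vert_bij_betw[OF \<open>j < n\<close>], symmetric])
    also have "\<dots> = (\<Sum>l < n - 1. ?B $$ (r,l) * (?B ^\<^sub>m k *\<^sub>v ?b) $ l)"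
      using Suc by (intro sum.cong) (auto simp: mat_delete_index_del_vert[OF A])
    also have "\<dots> = (?B *\<^sub>v (?B ^\<^sub>m k *\<^sub>v ?b)) $ r"
      by (rule index_mult_mat_vec_sum[symmetric, OF B mult_mat_vec_carrier[OF pow_carrier_mat[OF B] b] Suc.prems])
    also have "\<dots> = ((?B * ?B ^\<^sub>m k) *\<^sub>v ?b) $ r"
      by (subst assoc_mult_mat_vec[OF B pow_carrier_mat[OF B] b]) (rule refl)
    also have "\<dots> = (?B ^\<^sub>m Suc k *\<^sub>v ?b) $ r"
      by (simp only: pow_mat_Suc_left[OF B])
    finally show ?case .
  qed
qed

lemma has_sum_UN_nonneg:
  fixes f :: "'a \<Rightarrow> 'b::{linorder_topology, ordered_comm_monoid_add, topological_comm_monoid_add,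
                         conditionally_complete_linorder, t3_space}"
  assumes f: "\<And>x. x \<in> A \<Longrightarrow> (f has_sum g x) (B x)" and g: "(g has_sum S) A"
    and nonneg: "\<And>x y. x \<in> A \<Longrightarrow> y \<in> B x \<Longrightarrow> 0 \<le> f y"
    and disj: "disjoint_family_on B A"
  shows "(f has_sum S) (\<Union>x\<in>A. B x)"
proof -
  have inj: "inj_on snd (Sigma A B)"
    using disj by (force simp: disjoint_family_on_def inj_on_def)
  have "(f \<circ> snd) summable_on Sigma A B"
    using f g nonneg by (intro summable_on_SigmaI[where g = g]) (auto dest: has_sum_imp_summable)
  then have "(f \<circ> snd has_sum S) (Sigma A B)"
    using f g by (intro has_sum_SigmaI) auto
  moreover have "(\<Union>x\<in>A. B x) = snd ` Sigma A B"
    by force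
  ultimately show ?thesis
    by (simp add: has_sum_reindex[OF inj])
qed

lemma has_sum_walk_weight_hitting_walks:
  assumes mg: "multigraph n E ends" and w: "\<forall>e\<in>E. 0 \<le> w e" and "i < n" "j < n" "i \<noteq> j"
    and sums: "(\<lambda>k. (mat_delete (adj_mat n E ends w) j j ^\<^sub>m k *\<^sub>v col_del (adj_mat n E ends w) j)
                 $ del_pos j i) sums s"
  shows "(walk_weight w has_sum s) (hitting_walks n E ends i j)"
proof -
  let ?G = "\<lambda>m. \<Sum>p \<in> hitting_walks_len n E ends i j m. walk_weight w p"
  have "del_pos j i < n - 1"
    using assms by (auto simp: del_pos_def)
  from sum_walk_weight_hitting_walks_len_eq_pow_mat[OF mg \<open>j < n\<close> this]
  have "(\<lambda>k. ?G (Suc k)) sums s"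
    using sums by (simp add: del_vert_del_pos[OF \<open>i \<noteq> j\<close>])
  moreover have "?G 0 = 0"
    by (simp add: hitting_walks_len_0[OF \<open>i \<noteq> j\<close>])
  ultimately have "?G sums s"
    using sums_Suc_iff[of ?G s] by simp
  moreover have weight_nonneg: "0 \<le> walk_weight w p" if "p \<in> hitting_walks_len n E ends i j m" for p m
    using that unfolding hitting_walks_len_def hitting_walks_def
    by (blast intro: walk_weight_nonneg[OF _ w])
  ultimately have "(?G has_sum s) UNIV"
    by (intro sums_nonneg_imp_has_sum sum_nonneg) auto
  then show ?thesis
    unfolding hitting_walks_eq_UN_len
    by (rule has_sum_UN_nonneg[rotated])
       (use weight_nonneg disjoint_family_hitting_walks_len finite_hitting_walks_len[OF mg] in auto)
qed

section \<open>Powers of a matrix of spectral radius below one\<close>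

lemma smult_mult_mat_vec:
  fixes A :: "'a::comm_semiring_0 mat"
  assumes "A \<in> carrier_mat nr nc" "v \<in> carrier_vec nc"
  shows "(a \<cdot>\<^sub>m A) *\<^sub>v v = a \<cdot>\<^sub>v (A *\<^sub>v v)"
  by (rule eq_vecI) (use assms in \<open>auto simp: scalar_prod_def sum_distrib_left ac_simps\<close>)

lemma smult_pow_mat:
  fixes A :: "'a::comm_semiring_1 mat"
  assumes "A \<in> carrier_mat n n"
  shows "(a \<cdot>\<^sub>m A) ^\<^sub>m k = a ^ k \<cdot>\<^sub>m A ^\<^sub>m k"
proof (induction k)
  case (Suc k)
  then show ?case
    using assms by (simp add: mult_smult_assoc_mat[of _ n n _ n] mult_smult_distrib[of _ n n _ n])
        (rule eq_matI, auto simp: ac_simps)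
qed (use assms in \<open>auto intro!: eq_matI\<close>)

lemma spectral_radius_smult_le:
  assumes A: "A \<in> carrier_mat n n" and "0 < n" "0 < c"
  shows "spectral_radius (complex_of_real c \<cdot>\<^sub>m A) \<le> c * spectral_radius A"
proof -
  have cA: "complex_of_real c \<cdot>\<^sub>m A \<in> carrier_mat n n"
    using A by simp
  obtain \<mu> where \<mu>: "eigenvalue (complex_of_real c \<cdot>\<^sub>m A) \<mu>"
    and radius: "spectral_radius (complex_of_real c \<cdot>\<^sub>m A) = norm \<mu>"
    using spectral_radius_mem_max(1)[OF cA \<open>0 < n\<close>] by (auto simp: spectrum_def)
  then obtain v where v: "v \<in> carrier_vec n" "v \<noteq> 0\<^sub>v n" "complex_of_real c \<cdot>\<^sub>v (A *\<^sub>v v) = \<mu> \<cdot>\<^sub>v v"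
    using A by (auto simp: eigenvalue_def eigenvector_def smult_mult_mat_vec)
  then have "A *\<^sub>v v = (\<mu> / complex_of_real c) \<cdot>\<^sub>v v"
    using \<open>0 < c\<close> by (metis (no_types) divide_inverse mult.commute nonzero_divide_eq_eq
        of_real_eq_0_iff order_less_irrefl smult_smult_assoc one_smult_vec)
  then have "eigenvalue A (\<mu> / complex_of_real c)"
    using v A by (auto simp: eigenvalue_def eigenvector_def)
  then have "norm (\<mu> / complex_of_real c) \<le> spectral_radius A"
    by (intro spectral_radius_mem_max(2)[OF A \<open>0 < n\<close>]) (auto simp: spectrum_def)
  then show ?thesis
    using \<open>0 < c\<close> radius by (simp add: norm_divide field_simps)
qed

lemma spectral_radius_of_real_smult_less_1:
  fixes B :: "real mat"
  assumes B: "B \<in> carrier_mat m m" and "0 < m" "0 < t"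
    and "t * spectral_radius (map_mat complex_of_real B) < 1"
  shows "spectral_radius (map_mat complex_of_real (t \<cdot>\<^sub>m B)) < 1"
proof -
  have "map_mat complex_of_real (t \<cdot>\<^sub>m B) = complex_of_real t \<cdot>\<^sub>m map_mat complex_of_real B"
    by (rule eq_matI) auto
  then show ?thesis
    using spectral_radius_smult_le[of "map_mat complex_of_real B" m t] assms by simp
qed

text \<open>Only boundedness of the powers is available for spectral radius below 1, so the matrix
  is first scaled up by a factor s > 1 that keeps its spectral radius below 1.\<close>

lemma spectral_radius_less_1_pow_mat_tendsto_0:
  fixes A :: "complex mat"
  assumes A: "A \<in> carrier_mat n n" and radius: "spectral_radius A < 1" and "r < n" "l < n"
  shows "(\<lambda>k. (A ^\<^sub>m k) $$ (r,l)) \<longlonglongrightarrow> 0"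
proof -
  define \<rho> where "\<rho> = spectral_radius A"
  define s where "s = 2 / (1 + \<rho>)"
  have "0 < n"
    using \<open>r < n\<close> by simp
  then have "0 \<le> \<rho>"
    using spectral_radius_mem_max(1)[OF A] by (auto simp: \<rho>_def)
  then have s: "1 < s" "s * \<rho> < 1"
    using radius by (auto simp: s_def \<rho>_def field_simps)
  have sA: "complex_of_real s \<cdot>\<^sub>m A \<in> carrier_mat n n"
    using A by simp
  have "spectral_radius (complex_of_real s \<cdot>\<^sub>m A) < 1"
    using spectral_radius_smult_le[OF A \<open>0 < n\<close>, of s] s by (simp add: \<rho>_def)
  then obtain c where c: "\<And>k. norm_bound ((complex_of_real s \<cdot>\<^sub>m A) ^\<^sub>m k) c"
    using spectral_radius_jnf_norm_bound_less_1_upper_triangular[OF sA] by blast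
  have bound: "norm ((A ^\<^sub>m k) $$ (r,l)) \<le> c * (1 / s) ^ k" for k
  proof -
    have "s ^ k * norm ((A ^\<^sub>m k) $$ (r,l)) = norm (((complex_of_real s \<cdot>\<^sub>m A) ^\<^sub>m k) $$ (r,l))"
      using A \<open>r < n\<close> \<open>l < n\<close> s by (simp add: smult_pow_mat[OF A] norm_mult norm_power)
    also have "\<dots> \<le> c"
      using c[of k] A \<open>r < n\<close> \<open>l < n\<close> by (simp add: norm_bound_def)
    finally show ?thesis
      using s by (simp add: power_one_over pos_le_divide_eq mult.commute)
  qed
  have lim: "(\<lambda>k. c * (1 / s) ^ k) \<longlonglongrightarrow> 0"
    using s by (intro tendsto_mult_right_zero LIMSEQ_power_zero) simp
  show ?thesis
    by (rule Lim_null_comparison[OF always_eventually lim]) (use bound in blast)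
qed

lemma pow_mat_vec_tendsto_0:
  fixes M :: "real mat"
  assumes M: "M \<in> carrier_mat m m" and radius: "spectral_radius (map_mat complex_of_real M) < 1"
    and v: "v \<in> carrier_vec m" and "r < m"
  shows "(\<lambda>k. (M ^\<^sub>m k *\<^sub>v v) $ r) \<longlonglongrightarrow> 0"
proof -
  have "(\<lambda>k. (M ^\<^sub>m k) $$ (r,l)) \<longlonglongrightarrow> 0" if "l < m" for l
  proof -
    have "(\<lambda>k. (map_mat complex_of_real M ^\<^sub>m k) $$ (r,l)) \<longlonglongrightarrow> 0"
      using M radius \<open>r < m\<close> \<open>l < m\<close> by (intro spectral_radius_less_1_pow_mat_tendsto_0) auto
    then show ?thesis
      using M \<open>r < m\<close> \<open>l < m\<close> tendsto_of_real_iff[where 'a = complex, of "\<lambda>k. (M ^\<^sub>m k) $$ (r,l)" 0]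
      by (simp add: of_real_hom.mat_hom_pow[OF M, symmetric])
  qed
  then have "(\<lambda>k. \<Sum>l<m. (M ^\<^sub>m k) $$ (r,l) * v $ l) \<longlonglongrightarrow> 0"
    by (intro tendsto_null_sum tendsto_mult_left_zero) auto
  then show ?thesis
    unfolding index_mult_mat_vec_sum[OF pow_carrier_mat[OF M] v \<open>r < m\<close>] .
qed

section \<open>Neumann series\<close>

lemma pow_mat_mult_vec_Suc:
  assumes "A \<in> carrier_mat n n" "v \<in> carrier_vec n"
  shows "A ^\<^sub>m Suc k *\<^sub>v v = A ^\<^sub>m k *\<^sub>v (A *\<^sub>v v)"
  using assms by (simp add: assoc_mult_mat_vec[of _ n n _ n])

lemma one_minus_mat_mult_vec:
  fixes M :: "'a::ring_1 mat"
  assumes "M \<in> carrier_mat n n" "v \<in> carrier_vec n"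
  shows "(1\<^sub>m n - M) *\<^sub>v v = v - M *\<^sub>v v"
  using minus_mult_distrib_mat_vec[OF one_carrier_mat assms] assms by simp

lemma invertible_one_minus_mat_of_pow_tendsto_0:
  fixes M :: "'a::real_normed_field mat"
  assumes M: "M \<in> carrier_mat m m"
    and decay: "\<And>v r. v \<in> carrier_vec m \<Longrightarrow> r < m \<Longrightarrow> (\<lambda>k. (M ^\<^sub>m k *\<^sub>v v) $ r) \<longlonglongrightarrow> 0"
  obtains N where "N \<in> carrier_mat m m" "N * (1\<^sub>m m - M) = 1\<^sub>m m" "(1\<^sub>m m - M) * N = 1\<^sub>m m"
proof -
  have C: "1\<^sub>m m - M \<in> carrier_mat m m"
    by (rule minus_carrier_mat[OF M])
  have "v = 0\<^sub>v m" if v: "v \<in> carrier_vec m" and "(1\<^sub>m m - M) *\<^sub>v v = 0\<^sub>v m" for v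
  proof -
    have "v - M *\<^sub>v v = 0\<^sub>v m"
      using that one_minus_mat_mult_vec[OF M v] by simp
    then have fixed: "M *\<^sub>v v = v"
    proof (intro eq_vecI)
      fix r assume "r < dim_vec v"
      with \<open>v - M *\<^sub>v v = 0\<^sub>v m\<close> have "(v - M *\<^sub>v v) $ r = 0"
        using v by simp
      then show "(M *\<^sub>v v) $ r = v $ r"
        using \<open>r < dim_vec v\<close> M v by simp
    qed (use M v in simp)
    have "M ^\<^sub>m k *\<^sub>v v = v" for k
    proof (induction k)
      case (Suc k)
      then show ?case
        by (simp only: pow_mat_mult_vec_Suc[OF M v] fixed)
    qed (use M v in simp)
    then have "(\<lambda>k. v $ r) \<longlonglongrightarrow> 0" if "r < m" for r
      using decay[OF v that] by simp
    then show ?thesis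
      using v by (intro eq_vecI) (auto simp: LIMSEQ_const_iff)
  qed
  then have "det (1\<^sub>m m - M) \<noteq> 0"
    using det_0_iff_vec_prod_zero[OF C] by blast
  from det_non_zero_imp_unit[OF C this, of "()"] show ?thesis
    using that unfolding Units_def ring_mat_def by auto
qed

text \<open>The partial sums of the series telescope to \<open>x - M\<^sup>K x\<close>.\<close>

lemma sums_pow_mat_mult_vec:
  fixes M :: "'a::real_normed_field mat"
  assumes M: "M \<in> carrier_mat m m" and x: "x \<in> carrier_vec m" and "r < m"
    and v: "(1\<^sub>m m - M) *\<^sub>v x = v"
    and decay: "(\<lambda>k. (M ^\<^sub>m k *\<^sub>v x) $ r) \<longlonglongrightarrow> 0"
  shows "(\<lambda>k. (M ^\<^sub>m k *\<^sub>v v) $ r) sums x $ r"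
proof -
  have Mx: "M *\<^sub>v x \<in> carrier_vec m"
    using M x by simp
  have "(\<Sum>k<K. (M ^\<^sub>m k *\<^sub>v v) $ r) = x $ r - (M ^\<^sub>m K *\<^sub>v x) $ r" for K
  proof (induction K)
    case (Suc K)
    have "M ^\<^sub>m K *\<^sub>v v = M ^\<^sub>m K *\<^sub>v x - M ^\<^sub>m K *\<^sub>v (M *\<^sub>v x)"
      using x Mx by (simp add: v[symmetric] one_minus_mat_mult_vec[OF M]
          mult_minus_distrib_mat_vec[OF pow_carrier_mat[OF M]])
    also have "\<dots> = M ^\<^sub>m K *\<^sub>v x - M ^\<^sub>m Suc K *\<^sub>v x"
      by (simp only: pow_mat_mult_vec_Suc[OF M x])
    finally have "(M ^\<^sub>m K *\<^sub>v v) $ r = (M ^\<^sub>m K *\<^sub>v x - M ^\<^sub>m Suc K *\<^sub>v x) $ r"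
      by (rule arg_cong)
    also have "\<dots> = (M ^\<^sub>m K *\<^sub>v x) $ r - (M ^\<^sub>m Suc K *\<^sub>v x) $ r"
      using M \<open>r < m\<close> by (intro index_minus_vec) simp_all
    finally show ?case
      using Suc.IH by simp
  qed (use M x \<open>r < m\<close> in simp)
  moreover have "(\<lambda>K. x $ r - (M ^\<^sub>m K *\<^sub>v x) $ r) \<longlonglongrightarrow> x $ r"
    using tendsto_diff[OF tendsto_const decay] by simp
  ultimately show ?thesis
    by (simp add: sums_def)
qed

lemma neumann_series:
  fixes M :: "'a::real_normed_field mat"
  assumes M: "M \<in> carrier_mat m m"
    and decay: "\<And>v r. v \<in> carrier_vec m \<Longrightarrow> r < m \<Longrightarrow> (\<lambda>k. (M ^\<^sub>m k *\<^sub>v v) $ r) \<longlonglongrightarrow> 0"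
  obtains N where "N \<in> carrier_mat m m" "N * (1\<^sub>m m - M) = 1\<^sub>m m" "(1\<^sub>m m - M) * N = 1\<^sub>m m"
    and "\<And>v r. v \<in> carrier_vec m \<Longrightarrow> r < m \<Longrightarrow> (\<lambda>k. (M ^\<^sub>m k *\<^sub>v v) $ r) sums (N *\<^sub>v v) $ r"
proof -
  obtain N where N: "N \<in> carrier_mat m m" "N * (1\<^sub>m m - M) = 1\<^sub>m m" "(1\<^sub>m m - M) * N = 1\<^sub>m m"
    using invertible_one_minus_mat_of_pow_tendsto_0[OF M decay] by blast
  have "(\<lambda>k. (M ^\<^sub>m k *\<^sub>v v) $ r) sums (N *\<^sub>v v) $ r" if v: "v \<in> carrier_vec m" and "r < m" for v r
  proof (rule sums_pow_mat_mult_vec[OF M _ \<open>r < m\<close>])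
    show Nv: "N *\<^sub>v v \<in> carrier_vec m"
      using N v by simp
    show "(1\<^sub>m m - M) *\<^sub>v (N *\<^sub>v v) = v"
      using assoc_mult_mat_vec[OF minus_carrier_mat[OF M, of "1\<^sub>m m"] N(1) v] N(3) v by simp
    show "(\<lambda>k. (M ^\<^sub>m k *\<^sub>v (N *\<^sub>v v)) $ r) \<longlonglongrightarrow> 0"
      by (rule decay[OF Nv \<open>r < m\<close>])
  qed
  with N that show ?thesis
    by blast
qed

lemma adj_mat_scale: "adj_mat n E ends (\<lambda>e. c * w e) = c \<cdot>\<^sub>m adj_mat n E ends w"
  by (rule eq_matI) (auto simp: adj_mat_def sum_distrib_left)

lemma mat_delete_smult: "mat_delete (c \<cdot>\<^sub>m A) i j = c \<cdot>\<^sub>m mat_delete A i j"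
  by (rule eq_matI) (auto simp: mat_delete_def)

lemma col_del_smult:
  assumes "A \<in> carrier_mat n n" "j < n"
  shows "col_del (c \<cdot>\<^sub>m A) j = c \<cdot>\<^sub>v col_del A j"
  using assms by (intro eq_vecI) (auto simp: col_del_def del_vert_def)

lemma inverse_smult_one_minus_mat:
  fixes B N :: "'a::field mat"
  assumes B: "B \<in> carrier_mat n n" and N: "N \<in> carrier_mat n n" and "t \<noteq> 0"
    and inv: "N * (1\<^sub>m n - t \<cdot>\<^sub>m B) = 1\<^sub>m n" "(1\<^sub>m n - t \<cdot>\<^sub>m B) * N = 1\<^sub>m n"
  shows "(t \<cdot>\<^sub>m N) * (inverse t \<cdot>\<^sub>m 1\<^sub>m n - B) = 1\<^sub>m n"
    and "(inverse t \<cdot>\<^sub>m 1\<^sub>m n - B) * (t \<cdot>\<^sub>m N) = 1\<^sub>m n"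
proof -
  have C: "1\<^sub>m n - t \<cdot>\<^sub>m B \<in> carrier_mat n n"
    using B by (simp add: minus_carrier_mat)
  have eq: "inverse t \<cdot>\<^sub>m 1\<^sub>m n - B = inverse t \<cdot>\<^sub>m (1\<^sub>m n - t \<cdot>\<^sub>m B)"
    by (rule eq_matI) (use B \<open>t \<noteq> 0\<close> in \<open>auto simp: field_simps\<close>)
  have one: "t \<cdot>\<^sub>m (inverse t \<cdot>\<^sub>m 1\<^sub>m n) = 1\<^sub>m n" "inverse t \<cdot>\<^sub>m (t \<cdot>\<^sub>m 1\<^sub>m n) = 1\<^sub>m n"
    using \<open>t \<noteq> 0\<close> by (auto intro!: eq_matI)
  have tC: "inverse t \<cdot>\<^sub>m (1\<^sub>m n - t \<cdot>\<^sub>m B) \<in> carrier_mat n n" and tN: "t \<cdot>\<^sub>m N \<in> carrier_mat n n"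
    using C N by simp_all
  show "(t \<cdot>\<^sub>m N) * (inverse t \<cdot>\<^sub>m 1\<^sub>m n - B) = 1\<^sub>m n"
    unfolding eq mult_smult_assoc_mat[OF N tC] mult_smult_distrib[OF N C] inv one ..
  show "(inverse t \<cdot>\<^sub>m 1\<^sub>m n - B) * (t \<cdot>\<^sub>m N) = 1\<^sub>m n"
    unfolding eq mult_smult_assoc_mat[OF C tN] mult_smult_distrib[OF C N] inv one ..
qed

theorem lemma6:
  fixes n :: nat and E :: "'e set" and ends :: "'e \<Rightarrow> nat set" and w :: "'e \<Rightarrow> real"
    and i j :: nat and t :: real
  assumes mg: "multigraph n E ends"
    and conn: "connected_mg n E ends"
    and n2: "n \<ge> 2"
    and wpos: "\<forall>e\<in>E. w e > 0"
    and ij: "i < n" "j < n" "i \<noteq> j"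
    and t: "0 < t" "t * spectral_radius (map_mat complex_of_real (mat_delete (adj_mat n E ends w) j j)) < 1"
  shows "\<exists>N \<in> carrier_mat (n - 1) (n - 1).
           N * (inverse t \<cdot>\<^sub>m 1\<^sub>m (n - 1) - mat_delete (adj_mat n E ends w) j j) = 1\<^sub>m (n - 1) \<and>
           (inverse t \<cdot>\<^sub>m 1\<^sub>m (n - 1) - mat_delete (adj_mat n E ends w) j j) * N = 1\<^sub>m (n - 1) \<and>
           ((walk_weight (\<lambda>e. t * w e)) has_sum
              (row N (del_pos j i) \<bullet> col_del (adj_mat n E ends w) j))
            (hitting_walks n E ends i j)"
proof -
  define A where "A = adj_mat n E ends w"
  define B where "B = mat_delete A j j"
  define b where "b = col_del A j"
  have A: "A \<in> carrier_mat n n" and B: "B \<in> carrier_mat (n - 1) (n - 1)" and b: "b \<in> carrier_vec (n - 1)"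
    by (auto simp: A_def B_def b_def adj_mat_def mat_delete_def col_del_def)
  have tB: "t \<cdot>\<^sub>m B \<in> carrier_mat (n - 1) (n - 1)"
    using B by simp
  have "spectral_radius (map_mat complex_of_real (t \<cdot>\<^sub>m B)) < 1"
    using spectral_radius_of_real_smult_less_1[OF B _ t(1)] n2 t(2) by (simp add: B_def A_def)
  then obtain N where N: "N \<in> carrier_mat (n - 1) (n - 1)"
    "N * (1\<^sub>m (n - 1) - t \<cdot>\<^sub>m B) = 1\<^sub>m (n - 1)" "(1\<^sub>m (n - 1) - t \<cdot>\<^sub>m B) * N = 1\<^sub>m (n - 1)"
    and sums: "\<And>v r. v \<in> carrier_vec (n - 1) \<Longrightarrow> r < n - 1 \<Longrightarrow>
        (\<lambda>k. ((t \<cdot>\<^sub>m B) ^\<^sub>m k *\<^sub>v v) $ r) sums (N *\<^sub>v v) $ r"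
    using neumann_series[OF tB pow_mat_vec_tendsto_0[OF tB]] by blast
  have r: "del_pos j i < n - 1"
    using ij by (auto simp: del_pos_def)
  have "(walk_weight (\<lambda>e. t * w e) has_sum (N *\<^sub>v (t \<cdot>\<^sub>v b)) $ del_pos j i) (hitting_walks n E ends i j)"
  proof (rule has_sum_walk_weight_hitting_walks[OF mg _ ij])
    show "\<forall>e\<in>E. 0 \<le> t * w e"
      using wpos t(1) by (simp add: less_imp_le)
    show "(\<lambda>k. (mat_delete (adj_mat n E ends (\<lambda>e. t * w e)) j j ^\<^sub>m k *\<^sub>v
        col_del (adj_mat n E ends (\<lambda>e. t * w e)) j) $ del_pos j i) sums (N *\<^sub>v (t \<cdot>\<^sub>v b)) $ del_pos j i"
      using sums[OF _ r, of "t \<cdot>\<^sub>v b"] b ij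
      by (simp add: adj_mat_scale mat_delete_smult col_del_smult[OF A] flip: A_def B_def b_def)
  qed
  moreover have "(N *\<^sub>v (t \<cdot>\<^sub>v b)) $ del_pos j i = row (t \<cdot>\<^sub>m N) (del_pos j i) \<bullet> b"
    using N b r by (simp add: mult_mat_vec smult_mult_mat_vec)
  ultimately show ?thesis
    using N inverse_smult_one_minus_mat[OF B N(1) _ N(2,3)] t(1)
    by (intro bexI[of _ "t \<cdot>\<^sub>m N"]) (simp_all add: A_def B_def b_def)
qed

end
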